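(* Let $$\alpha=1+\frac16\left(\sqrt[3]{54-6\sqrt{33}}+\sqrt[3]{54+6\sqrt{33}}\right)\approx 2.1915,\qquad \beta=1+\frac13\left(\sqrt[3]{54-6\sqrt{33}}+\sqrt[3]{54+6\sqrt{33}}\right)\approx 3.3830,$$ let $g(x)=\alpha x(1-x)$, $h(x)=\beta x(1-x)$, and let $$p_\pm=\frac{\beta+1\pm\sqrt{(\beta+1)(\beta-3)}}{2\beta}$$ be the period-2 points of $h$. Then $h\!\left(\frac{\alpha-1}{\alpha}\right)=p_+$, $g(p_-)=\frac{\alpha-1}{\alpha}$, $g\!\left(\frac{\beta-1}{\beta}\right)=p_-$, $g\!\left(\frac1\beta\right)=p_-$, and $g(p_+)=\frac1\beta$. Consequently the set $\Lambda=\left\{\frac{\alpha-1}{\alpha},\ \frac{\beta-1}{\beta},\ p_-,\ p_+,\ \frac1\beta\right\}$ consists of five points, satisfies $\Lambda=g(\Lambda)\cup h(\Lambda)$ (a 5-point toss-and-catch), and contains the bridging point $\frac1\beta$, which is a periodic point of neither $g$ nor $h$.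
   Context: For $\gamma\in\mathbb{R}$ let $f_\gamma(x)=\gamma x(1-x)$ denote the logistic map; its nontrivial fixed point is $\frac{\gamma-1}{\gamma}$. The logistic IFS is the pair $\{g,h\}=\{f_\alpha,f_\beta\}$ with $\alpha<\beta$, where at each step $g$ is applied with probability $p\in(0,1)$ and $h$ with probability $1-p$, independently. An invariant set of the IFS is a set $\Lambda$ with $\Lambda=g(\Lambda)\cup h(\Lambda)$; a finite invariant set with $n$ points is called an $n$-point toss-and-catch. A bridging point is a point of $\Lambda$ that belongs to neither the union of all periodic orbits of $g$ nor the union of all periodic orbits of $h$. *)

theory Defs
  imports Complex_Main
begin

definition logistic :: "real \<Rightarrow> real \<Rightarrow> real" where
  "logistic \<gamma> x = \<gamma> * x * (1 - x)"

definition periodic_point :: "('a \<Rightarrow> 'a) \<Rightarrow> 'a \<Rightarrow> bool" where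
  "periodic_point f x \<longleftrightarrow> (\<exists>n>0. (f ^^ n) x = x)"

definition periodic_orbits_union :: "('a \<Rightarrow> 'a) \<Rightarrow> 'a set" where
  "periodic_orbits_union f = {y. \<exists>x. periodic_point f x \<and> (\<exists>k. y = (f ^^ k) x)}"

definition ifs_invariant :: "('a \<Rightarrow> 'a) \<Rightarrow> ('a \<Rightarrow> 'a) \<Rightarrow> 'a set \<Rightarrow> bool" where
  "ifs_invariant g h \<Lambda> \<longleftrightarrow> \<Lambda> = g ` \<Lambda> \<union> h ` \<Lambda>"

definition bridging_point :: "('a \<Rightarrow> 'a) \<Rightarrow> ('a \<Rightarrow> 'a) \<Rightarrow> 'a set \<Rightarrow> 'a \<Rightarrow> bool" where
  "bridging_point g h \<Lambda> x \<longleftrightarrow> x \<in> \<Lambda> \<and> x \<notin> periodic_orbits_union g \<and> x \<notin> periodic_orbits_union h"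

end

theory Submission
  imports Defs
begin

text \<open>
  Put \<open>t = \<alpha> - 1\<close>. Cardano's formula gives \<open>2 t\<^sup>3 = 2 t + 1\<close>, and \<open>\<beta> = 1 + 2 t = 2 \<alpha> - 1\<close>.
  Modulo this cubic the five points are the quadratic polynomials
  \<open>(\<alpha> - 1)/\<alpha> = 1 + 2 t - 2 t\<^sup>2\<close>, \<open>(\<beta> - 1)/\<beta> = 4 + 2 t - 4 t\<^sup>2\<close>, \<open>p\<^sub>- = 2 t\<^sup>2 - 2 t\<close>,
  \<open>p\<^sub>+ = 2 t\<^sup>2 - 2\<close> and \<open>1/\<beta> = 4 t\<^sup>2 - 2 t - 3\<close>, and the four orbit relations that
  are special to these parameters become polynomial identities modulo \<open>2 t\<^sup>3 - 2 t - 1\<close>.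
  All other relations (fixed points, \<open>1/\<gamma>\<close> as preimage of the fixed point, the 2-cycle of \<open>h\<close>,
  the symmetry \<open>x \<mapsto> 1 - x\<close>) hold for every logistic map.  The bounds \<open>1.19 < t < 1.2\<close>
  order the five points, so they are distinct; under \<open>g\<close> the point \<open>1/\<beta>\<close> falls into
  \<open>{p\<^sub>-, (\<alpha> - 1)/\<alpha>}\<close> and under \<open>h\<close> into the fixed point \<open>(\<beta> - 1)/\<beta>\<close>, never to return.
\<close>

lemma periodic_point_funpow:
  assumes "periodic_point f x"
  shows "periodic_point f ((f ^^ k) x)"
proof -
  obtain n where "n > 0" and x: "(f ^^ n) x = x"
    using assms unfolding periodic_point_def by blast
  have "f ^^ n \<circ> f ^^ k = f ^^ k \<circ> f ^^ n"
    by (metis add.commute funpow_add)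
  then have "(f ^^ n) ((f ^^ k) x) = (f ^^ k) x"
    using x by (metis comp_apply)
  with \<open>n > 0\<close> show ?thesis
    unfolding periodic_point_def by auto
qed

lemma periodic_orbits_union_eq: "periodic_orbits_union f = {x. periodic_point f x}"
proof
  show "periodic_orbits_union f \<subseteq> {x. periodic_point f x}"
    unfolding periodic_orbits_union_def by (auto intro: periodic_point_funpow)
  show "{x. periodic_point f x} \<subseteq> periodic_orbits_union f"
    unfolding periodic_orbits_union_def by (force intro: funpow_0[symmetric])
qed

lemma bridging_point_iff:
  "bridging_point g h \<Lambda> x \<longleftrightarrow> x \<in> \<Lambda> \<and> \<not> periodic_point g x \<and> \<not> periodic_point h x"
  unfolding bridging_point_def periodic_orbits_union_eq by simp

lemma not_periodic_point_if_trapped: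
  assumes "f x \<in> S" and "f ` S \<subseteq> S" and "x \<notin> S"
  shows "\<not> periodic_point f x"
proof
  have trapped: "(f ^^ Suc n) x \<in> S" for n
    by (induction n) (use assms(1,2) in auto)
  assume "periodic_point f x"
  then obtain n where "n > 0" and "(f ^^ n) x = x"
    unfolding periodic_point_def by blast
  then show False
    using trapped[of "n - 1"] assms(3) by simp
qed

lemma toss_and_catch_five_points:
  assumes "distinct [a, b, p, q, z]"
    and g: "g a = a" "g b = p" "g p = a" "g q = z" "g z = p"
    and h: "h a = q" "h b = b" "h p = q" "h q = p" "h z = b"
  shows "card {a, b, p, q, z} = 5 \<and> ifs_invariant g h {a, b, p, q, z}
       \<and> bridging_point g h {a, b, p, q, z} z \<and> \<not> periodic_point g z \<and> \<not> periodic_point h z"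
proof -
  have "card {a, b, p, q, z} = 5"
    using distinct_card[OF assms(1)] by simp
  moreover have "ifs_invariant g h {a, b, p, q, z}"
    unfolding ifs_invariant_def by (auto simp: g h)
  moreover have "\<not> periodic_point g z"
  proof (rule not_periodic_point_if_trapped)
    show "g z \<in> {a, p}" and "g ` {a, p} \<subseteq> {a, p}"
      by (simp_all add: g)
    show "z \<notin> {a, p}"
      using assms(1) by auto
  qed
  moreover have "\<not> periodic_point h z"
  proof (rule not_periodic_point_if_trapped)
    show "h z \<in> {b}" and "h ` {b} \<subseteq> {b}"
      by (simp_all add: h)
    show "z \<notin> {b}"
      using assms(1) by auto
  qed
  ultimately show ?thesis
    unfolding bridging_point_iff by blast
qed

lemma logistic_fixed_point:
  "\<gamma> \<noteq> 0 \<Longrightarrow> logistic \<gamma> ((\<gamma> - 1) / \<gamma>) = (\<gamma> - 1) / \<gamma>"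
  unfolding logistic_def by (simp add: field_simps)

lemma logistic_inverse_parameter:
  "\<gamma> \<noteq> 0 \<Longrightarrow> logistic \<gamma> (1 / \<gamma>) = (\<gamma> - 1) / \<gamma>"
  unfolding logistic_def by (simp add: field_simps)

lemma logistic_one_minus: "logistic \<gamma> (1 - x) = logistic \<gamma> x"
  unfolding logistic_def by simp

lemma logistic_period_two:
  fixes \<beta> :: real
  assumes "3 \<le> \<beta>"
  defines "s \<equiv> sqrt ((\<beta> + 1) * (\<beta> - 3))"
  shows "logistic \<beta> ((\<beta> + 1 + s) / (2 * \<beta>)) = (\<beta> + 1 - s) / (2 * \<beta>)"
    and "logistic \<beta> ((\<beta> + 1 - s) / (2 * \<beta>)) = (\<beta> + 1 + s) / (2 * \<beta>)"
proof -
  have "\<beta> \<noteq> 0" and s2: "s\<^sup>2 = (\<beta> + 1) * (\<beta> - 3)"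
    unfolding s_def using assms(1) by simp_all
  then show "logistic \<beta> ((\<beta> + 1 + s) / (2 * \<beta>)) = (\<beta> + 1 - s) / (2 * \<beta>)"
    and "logistic \<beta> ((\<beta> + 1 - s) / (2 * \<beta>)) = (\<beta> + 1 + s) / (2 * \<beta>)"
    unfolding logistic_def by (simp_all add: field_simps) algebra+
qed

lemma real_root3_sum_cube:
  "(root 3 a + root 3 b) ^ 3 = a + b + 3 * root 3 (a * b) * (root 3 a + root 3 b)"
proof -
  have "(root 3 a + root 3 b) ^ 3
      = root 3 a ^ 3 + root 3 b ^ 3 + 3 * (root 3 a * root 3 b) * (root 3 a + root 3 b)"
    by algebra
  then show ?thesis
    by (simp add: odd_real_root_pow real_root_mult)
qed

lemma real_root3_sum_pos:
  assumes "0 < a + b"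
  shows "0 < root 3 a + root 3 b"
proof -
  have "- root 3 a < root 3 b"
    using assms by (simp flip: real_root_minus)
  then show ?thesis
    by simp
qed

lemma cardano_cubic:
  fixes t :: real
  assumes "t = (root 3 (54 - 6 * sqrt 33) + root 3 (54 + 6 * sqrt 33)) / 6"
  shows "2 * t ^ 3 = 2 * t + 1" and "0 < t"
proof -
  have "(54 - 6 * sqrt 33) * (54 + 6 * sqrt 33) = (12::real) ^ 3"
    by (simp add: algebra_simps power2_eq_square flip: power2_eq_square)
  then have "root 3 ((54 - 6 * sqrt 33) * (54 + 6 * sqrt 33)) = 12"
    by (simp add: real_root_power_cancel)
  moreover have "root 3 (54 - 6 * sqrt 33) + root 3 (54 + 6 * sqrt 33) = 6 * t"
    using assms by simp
  ultimately have "(6 * t) ^ 3 = 108 + 36 * (6 * t)"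
    using real_root3_sum_cube[of "54 - 6 * sqrt 33" "54 + 6 * sqrt 33"] by simp
  then show "2 * t ^ 3 = 2 * t + 1"
    by algebra
  show "0 < t"
    using real_root3_sum_pos[of "54 - 6 * sqrt 33" "54 + 6 * sqrt 33"] assms by simp
qed

lemma cubic_root_bounds:
  fixes t :: real
  assumes cubic: "2 * t ^ 3 = 2 * t + 1" and "0 < t"
  shows "1.19 < t" and "t < 1.2"
proof -
  \<comment> \<open>For \<open>P t = 2 t\<^sup>3 - 2 t - 1\<close>: \<open>P t - P s = (t - s) (2 t (t + s) + 2 s\<^sup>2 - 2)\<close>, with
    \<open>P 1.19 = -0.009682\<close> and \<open>P 1.2 = 0.056\<close>.\<close>
  have "(t - 1.19) * (2 * t * (t + 1.19) + 0.8322) = 0.009682"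
    using cubic by algebra
  then have "0 < (t - 1.19) * (2 * t * (t + 1.19) + 0.8322)"
    by simp
  moreover have "0 < 2 * t * (t + 1.19) + 0.8322"
    using \<open>0 < t\<close> by (intro add_pos_pos mult_pos_pos) auto
  ultimately show "1.19 < t"
    using zero_less_mult_pos2 by fastforce
  have "(1.2 - t) * (2 * t * (t + 1.2) + 0.88) = 0.056"
    using cubic by algebra
  then have "0 < (1.2 - t) * (2 * t * (t + 1.2) + 0.88)"
    by simp
  moreover have "0 < 2 * t * (t + 1.2) + 0.88"
    using \<open>0 < t\<close> by (intro add_pos_pos mult_pos_pos) auto
  ultimately show "t < 1.2"
    using zero_less_mult_pos2 by fastforce
qed

lemma toss_and_catch_points_as_quadratics:
  fixes t \<alpha> \<beta> :: real
  assumes cubic: "2 * t ^ 3 = 2 * t + 1" and "1 < t"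
    and \<alpha>: "\<alpha> = 1 + t" and \<beta>: "\<beta> = 1 + 2 * t"
  shows "(\<alpha> - 1) / \<alpha> = 1 + 2 * t - 2 * t\<^sup>2"
    and "(\<beta> - 1) / \<beta> = 4 + 2 * t - 4 * t\<^sup>2"
    and "1 / \<beta> = 4 * t\<^sup>2 - 2 * t - 3"
    and "(\<beta> + 1 + sqrt ((\<beta> + 1) * (\<beta> - 3))) / (2 * \<beta>) = 2 * t\<^sup>2 - 2"
    and "(\<beta> + 1 - sqrt ((\<beta> + 1) * (\<beta> - 3))) / (2 * \<beta>) = 2 * t\<^sup>2 - 2 * t"
proof -
  have "\<alpha> \<noteq> 0" and "2 * \<beta> \<noteq> 0"
    using \<open>1 < t\<close> \<alpha> \<beta> by simp_all
  then have "\<beta> \<noteq> 0"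
    by simp
  have sqrt: "sqrt ((\<beta> + 1) * (\<beta> - 3)) = 2 * (2 * t\<^sup>2 - t - 1)"
  proof (rule real_sqrt_unique)
    show "(2 * (2 * t\<^sup>2 - t - 1))\<^sup>2 = (\<beta> + 1) * (\<beta> - 3)"
      unfolding \<beta> using cubic by algebra
    have "0 \<le> (2 * t + 1) * (t - 1)"
      using \<open>1 < t\<close> by simp
    then show "0 \<le> 2 * (2 * t\<^sup>2 - t - 1)"
      by (simp add: algebra_simps power2_eq_square)
  qed
  show "(\<alpha> - 1) / \<alpha> = 1 + 2 * t - 2 * t\<^sup>2"
    unfolding nonzero_divide_eq_eq[OF \<open>\<alpha> \<noteq> 0\<close>] unfolding \<alpha> using cubic by algebra
  show "(\<beta> - 1) / \<beta> = 4 + 2 * t - 4 * t\<^sup>2"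
    unfolding nonzero_divide_eq_eq[OF \<open>\<beta> \<noteq> 0\<close>] unfolding \<beta> using cubic by algebra
  show "1 / \<beta> = 4 * t\<^sup>2 - 2 * t - 3"
    unfolding nonzero_divide_eq_eq[OF \<open>\<beta> \<noteq> 0\<close>] unfolding \<beta> using cubic by algebra
  show "(\<beta> + 1 + sqrt ((\<beta> + 1) * (\<beta> - 3))) / (2 * \<beta>) = 2 * t\<^sup>2 - 2"
    unfolding nonzero_divide_eq_eq[OF \<open>2 * \<beta> \<noteq> 0\<close>] sqrt unfolding \<beta> using cubic by algebra
  show "(\<beta> + 1 - sqrt ((\<beta> + 1) * (\<beta> - 3))) / (2 * \<beta>) = 2 * t\<^sup>2 - 2 * t"
    unfolding nonzero_divide_eq_eq[OF \<open>2 * \<beta> \<noteq> 0\<close>] sqrt unfolding \<beta> using cubic by algebra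
qed

lemma toss_and_catch_orbit_relations:
  fixes t \<alpha> \<beta> p_plus p_minus :: real
  assumes cubic: "2 * t ^ 3 = 2 * t + 1" and "1 < t"
    and \<alpha>: "\<alpha> = 1 + t" and \<beta>: "\<beta> = 1 + 2 * t"
    and p_plus: "p_plus = (\<beta> + 1 + sqrt ((\<beta> + 1) * (\<beta> - 3))) / (2 * \<beta>)"
    and p_minus: "p_minus = (\<beta> + 1 - sqrt ((\<beta> + 1) * (\<beta> - 3))) / (2 * \<beta>)"
  shows "logistic \<beta> ((\<alpha> - 1) / \<alpha>) = p_plus"
    and "logistic \<alpha> p_minus = (\<alpha> - 1) / \<alpha>"
    and "logistic \<alpha> (1 / \<beta>) = p_minus"
    and "logistic \<alpha> p_plus = 1 / \<beta>"
  unfolding p_plus p_minus toss_and_catch_points_as_quadratics[OF cubic \<open>1 < t\<close> \<alpha> \<beta>]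
  unfolding logistic_def \<alpha> \<beta> using cubic by algebra+

lemma toss_and_catch_points_ordered:
  fixes t \<alpha> \<beta> p_plus p_minus :: real
  assumes cubic: "2 * t ^ 3 = 2 * t + 1" and "1.19 < t" and "t < 1.2"
    and \<alpha>: "\<alpha> = 1 + t" and \<beta>: "\<beta> = 1 + 2 * t"
    and p_plus: "p_plus = (\<beta> + 1 + sqrt ((\<beta> + 1) * (\<beta> - 3))) / (2 * \<beta>)"
    and p_minus: "p_minus = (\<beta> + 1 - sqrt ((\<beta> + 1) * (\<beta> - 3))) / (2 * \<beta>)"
  shows "1 / \<beta> < p_minus" and "p_minus < (\<alpha> - 1) / \<alpha>"
    and "(\<alpha> - 1) / \<alpha> < (\<beta> - 1) / \<beta>" and "(\<beta> - 1) / \<beta> < p_plus"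
proof -
  have "1 < t"
    using assms(2) by simp
  note points = toss_and_catch_points_as_quadratics[OF cubic this \<alpha> \<beta>]
  have "1.4161 < t\<^sup>2" and "t\<^sup>2 < 1.44"
    using power_strict_mono[of "1.19" t 2] power_strict_mono[of t "1.2" 2] assms(2,3)
    by (simp_all add: power2_eq_square)
  then show "1 / \<beta> < p_minus" and "p_minus < (\<alpha> - 1) / \<alpha>"
    and "(\<alpha> - 1) / \<alpha> < (\<beta> - 1) / \<beta>" and "(\<beta> - 1) / \<beta> < p_plus"
    unfolding p_plus p_minus points using assms(2,3) by simp_all
qed

theorem mainTheorem3:
  fixes \<alpha> \<beta> p_plus p_minus :: real and g h :: "real \<Rightarrow> real" and \<Lambda> :: "real set"
  assumes "\<alpha> = 1 + (root 3 (54 - 6 * sqrt 33) + root 3 (54 + 6 * sqrt 33)) / 6"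
      and "\<beta> = 1 + (root 3 (54 - 6 * sqrt 33) + root 3 (54 + 6 * sqrt 33)) / 3"
      and "g = logistic \<alpha>" and "h = logistic \<beta>"
      and "p_plus = (\<beta> + 1 + sqrt ((\<beta> + 1) * (\<beta> - 3))) / (2 * \<beta>)"
      and "p_minus = (\<beta> + 1 - sqrt ((\<beta> + 1) * (\<beta> - 3))) / (2 * \<beta>)"
      and "\<Lambda> = {(\<alpha> - 1) / \<alpha>, (\<beta> - 1) / \<beta>, p_minus, p_plus, 1 / \<beta>}"
  shows "h ((\<alpha> - 1) / \<alpha>) = p_plus \<and> g p_minus = (\<alpha> - 1) / \<alpha>
       \<and> g ((\<beta> - 1) / \<beta>) = p_minus \<and> g (1 / \<beta>) = p_minus \<and> g p_plus = 1 / \<beta>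
       \<and> card \<Lambda> = 5 \<and> ifs_invariant g h \<Lambda>
       \<and> bridging_point g h \<Lambda> (1 / \<beta>)
       \<and> \<not> periodic_point g (1 / \<beta>) \<and> \<not> periodic_point h (1 / \<beta>)"
proof -
  define t where "t = (root 3 (54 - 6 * sqrt 33) + root 3 (54 + 6 * sqrt 33)) / 6"
  have cubic: "2 * t ^ 3 = 2 * t + 1" and "0 < t"
    using cardano_cubic[OF t_def] by simp_all
  then have t: "1.19 < t" "t < 1.2"
    by (rule cubic_root_bounds)+
  then have "1 < t"
    by simp
  have \<alpha>: "\<alpha> = 1 + t" and \<beta>: "\<beta> = 1 + 2 * t"
    using assms(1,2) by (simp_all add: t_def)
  then have "\<alpha> \<noteq> 0" "\<beta> \<noteq> 0" "3 \<le> \<beta>"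
    using t by simp_all
  note special = toss_and_catch_orbit_relations[OF cubic \<open>1 < t\<close> \<alpha> \<beta> assms(5,6)]
  have "logistic \<alpha> ((\<beta> - 1) / \<beta>) = p_minus"
    using logistic_one_minus[of \<alpha> "1 / \<beta>"] special(3) \<open>\<beta> \<noteq> 0\<close> by (simp add: diff_divide_distrib)
  moreover have "distinct [(\<alpha> - 1) / \<alpha>, (\<beta> - 1) / \<beta>, p_minus, p_plus, 1 / \<beta>]"
    using toss_and_catch_points_ordered[OF cubic t \<alpha> \<beta> assms(5,6)]
    by (auto simp only: distinct.simps list.set insert_iff empty_iff simp_thms)
  ultimately have "card \<Lambda> = 5 \<and> ifs_invariant g h \<Lambda> \<and> bridging_point g h \<Lambda> (1 / \<beta>)
      \<and> \<not> periodic_point g (1 / \<beta>) \<and> \<not> periodic_point h (1 / \<beta>)"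
    unfolding assms(3,4,7)
    using special logistic_fixed_point logistic_inverse_parameter
      logistic_period_two[OF \<open>3 \<le> \<beta>\<close>, folded assms(5,6)] \<open>\<alpha> \<noteq> 0\<close> \<open>\<beta> \<noteq> 0\<close>
    by (intro toss_and_catch_five_points) simp_all
  then show ?thesis
    unfolding assms(3,4) using special \<open>logistic \<alpha> ((\<beta> - 1) / \<beta>) = p_minus\<close> by simp
qed

end
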